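(* Let $\alpha:[r]\to[m]$ be increasing and $L\in L_m(T_L(\alpha))$. If there exist $n$ and an injective $\beta:[r]\to[n]$ such that $L\,\Pi(\alpha,\beta)=\Pi(\alpha,\beta)$, then $L=I_m$.
   Context: $\mathbb{F}$ is the field with two elements, $[n]=\{1,\dots,n\}$, $e_{n,i}$ standard basis column vectors, $I_m$ identity. For transitive $T\subseteq\{(i,j):i,j\in[m],i>j\}$, $L_m(T)=I_m+\mathrm{span}_{\mathbb{F}}\{e_{m,i}e_{m,j}^{\top}:(i,j)\in T\}$. $T_L(\alpha)=\{(i,j):j\in\mathrm{Im}(\alpha),\ i\in[m],\ i>j\}$. $\Pi(\alpha,\beta)=\sum_{i=1}^re_{m,\alpha(i)}e_{n,\beta(i)}^{\top}$. *)

theory Defs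
  imports "HOL-Library.Z2" "Jordan_Normal_Form.Matrix"
begin

text \<open>The field F with two elements is the type bit (HOL-Library.Z2).
  Mathematical indices are 1-based (as in the paper); Jordan_Normal_Form
  matrix entries are 0-based, so entry (i,j) of the paper is entry (i-1,j-1).\<close>

text \<open>L_m(T) = I_m + span_F { e_{m,i} e_{m,j}^T : (i,j) in T }.  Since T is a finite
  set of positions, an element of the span is a linear combination with
  coefficients c(i,j), i.e. the matrix having entry c(i,j) at (i,j) in T, else 0.\<close>
definition Lm :: "nat \<Rightarrow> (nat \<times> nat) set \<Rightarrow> bit mat set" where
  "Lm m T = {1\<^sub>m m + mat m m (\<lambda>(a, b). if (a + 1, b + 1) \<in> T then c (a + 1, b + 1) else 0)
              | c :: nat \<times> nat \<Rightarrow> bit. True}"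

definition TL :: "nat \<Rightarrow> nat \<Rightarrow> (nat \<Rightarrow> nat) \<Rightarrow> (nat \<times> nat) set" where
  "TL m r \<alpha> = {(i, j). j \<in> \<alpha> ` {1..r} \<and> i \<in> {1..m} \<and> i > j}"

text \<open>Pi(alpha,beta) = sum_{i=1}^r e_{m,alpha(i)} e_{n,beta(i)}^T, an m x n matrix;
  its (a,b) entry is the sum over i of [alpha i = a and beta i = b].\<close>
definition Pi_mat :: "nat \<Rightarrow> nat \<Rightarrow> nat \<Rightarrow> (nat \<Rightarrow> nat) \<Rightarrow> (nat \<Rightarrow> nat) \<Rightarrow> bit mat" where
  "Pi_mat m n r \<alpha> \<beta> = mat m n (\<lambda>(a, b).
      \<Sum>i\<in>{1..r}. if \<alpha> i = a + 1 \<and> \<beta> i = b + 1 then 1 else 0)"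

end

theory Submission
  imports Defs
begin

text \<open>Since \<beta> is injective, column \<beta>(k) of \<Pi>(\<alpha>,\<beta>) is the unit vector e(\<alpha>(k)), so
  L \<Pi>(\<alpha>,\<beta>) = \<Pi>(\<alpha>,\<beta>) says that L fixes e(\<alpha>(k)): column \<alpha>(k) of L is that of I_m.
  But every entry in which an element of L_m(T_L(\<alpha>)) may differ from I_m lies in one
  of the columns \<alpha>(k).\<close>

lemma mult_mat_vec_unit_vec:
  fixes A :: "'a :: semiring_1 mat"
  assumes "A \<in> carrier_mat k m" and "j < m"
  shows "A *\<^sub>v unit_vec m j = col A j"
proof
  fix i assume "i < dim_vec (col A j)"
  then have "i < k" using assms(1) by simp
  have "(A *\<^sub>v unit_vec m j) $ i = (\<Sum>t<m. A $$ (i, t) * (if t = j then 1 else 0))"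
    using assms \<open>i < k\<close> by (simp add: scalar_prod_def lessThan_atLeast0)
  also have "\<dots> = A $$ (i, j)"
    using assms(2) by (simp add: if_distrib sum.delta cong: if_cong)
  finally show "(A *\<^sub>v unit_vec m j) $ i = col A j $ i"
    using assms \<open>i < k\<close> by simp
qed (use assms in simp)

lemma col_eq_unit_vec_if_fixes_col:
  fixes A :: "'a :: semiring_1 mat"
  assumes "A \<in> carrier_mat m m" and "B \<in> carrier_mat m n" and "A * B = B"
    and "col B b = unit_vec m j" and "b < n" and "j < m"
  shows "col A j = unit_vec m j"
proof -
  have "col A j = A *\<^sub>v unit_vec m j"
    using assms(1,6) by (simp add: mult_mat_vec_unit_vec)
  also have "\<dots> = col (A * B) b"
    using assms(1,2,4,5) by simp
  also have "\<dots> = unit_vec m j"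
    using assms(3,4) by simp
  finally show ?thesis .
qed

lemma Pi_mat_carrier: "Pi_mat m n r \<alpha> \<beta> \<in> carrier_mat m n"
  by (simp add: Pi_mat_def)

lemma col_Pi_mat:
  assumes "inj_on \<beta> {1..r}" and "k \<in> {1..r}" and "\<alpha> k \<in> {1..m}" and "\<beta> k \<in> {1..n}"
  shows "col (Pi_mat m n r \<alpha> \<beta>) (\<beta> k - 1) = unit_vec m (\<alpha> k - 1)"
proof
  fix t assume "t < dim_vec (unit_vec m (\<alpha> k - 1) :: bit vec)"
  then have "t < m" by simp
  have "(\<Sum>i\<in>{1..r}. if \<alpha> i = t + 1 \<and> \<beta> i = \<beta> k then 1 else 0)
      = (\<Sum>i\<in>{1..r}. if i = k then (if \<alpha> k = t + 1 then 1 else 0) else (0::bit))"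
    using assms(1,2) by (intro sum.cong) (auto dest: inj_onD)
  also have "\<dots> = (if \<alpha> k = t + 1 then 1 else 0)"
    using assms(2) by simp
  finally show "col (Pi_mat m n r \<alpha> \<beta>) (\<beta> k - 1) $ t = unit_vec m (\<alpha> k - 1) $ t"
    using assms(3,4) \<open>t < m\<close> by (auto simp: Pi_mat_def)
qed (simp add: Pi_mat_def)

lemma Lm_carrier: "L \<in> Lm m T \<Longrightarrow> L \<in> carrier_mat m m"
  by (auto simp: Lm_def)

lemma Lm_eq_one_if_cols_unit_vec:
  assumes "L \<in> Lm m T"
    and "\<And>i j. (i, j) \<in> T \<Longrightarrow> 0 < j \<Longrightarrow> j \<le> m \<Longrightarrow> col L (j - 1) = unit_vec m (j - 1)"
  shows "L = 1\<^sub>m m"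
proof -
  obtain c where L: "L = 1\<^sub>m m + mat m m (\<lambda>(a, b). if (a + 1, b + 1) \<in> T then c (a + 1, b + 1) else 0)"
    using assms(1) by (auto simp: Lm_def)
  have "L \<in> carrier_mat m m"
    using assms(1) by (rule Lm_carrier)
  show ?thesis
  proof (rule eq_matI)
    fix i j assume "i < dim_row (1\<^sub>m m :: bit mat)" "j < dim_col (1\<^sub>m m :: bit mat)"
    then have "i < m" "j < m" by auto
    show "L $$ (i, j) = 1\<^sub>m m $$ (i, j)"
    proof (cases "(i + 1, j + 1) \<in> T")
      case True
      then have "col L j = unit_vec m j"
        using assms(2)[of "i + 1" "j + 1"] \<open>j < m\<close> by simp
      have "L $$ (i, j) = col L j $ i"
        using \<open>L \<in> carrier_mat m m\<close> \<open>i < m\<close> \<open>j < m\<close> by simp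
      also have "\<dots> = 1\<^sub>m m $$ (i, j)"
        using \<open>col L j = unit_vec m j\<close> \<open>i < m\<close> \<open>j < m\<close> by simp
      finally show ?thesis .
    qed (use L \<open>i < m\<close> \<open>j < m\<close> in simp)
  qed (use \<open>L \<in> carrier_mat m m\<close> in simp_all)
qed

theorem lemma6:
  fixes m n r :: nat and \<alpha> \<beta> :: "nat \<Rightarrow> nat" and L :: "bit mat"
  assumes "\<alpha> ` {1..r} \<subseteq> {1..m}"
    and "strict_mono_on {1..r} \<alpha>"
    and "L \<in> Lm m (TL m r \<alpha>)"
    and "\<beta> ` {1..r} \<subseteq> {1..n}"
    and "inj_on \<beta> {1..r}"
    and "L * Pi_mat m n r \<alpha> \<beta> = Pi_mat m n r \<alpha> \<beta>"
  shows "L = 1\<^sub>m m"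
proof (rule Lm_eq_one_if_cols_unit_vec[OF assms(3)])
  fix i j assume "(i, j) \<in> TL m r \<alpha>"
  then obtain k where k: "k \<in> {1..r}" and j: "j = \<alpha> k"
    by (auto simp: TL_def)
  have "\<alpha> k \<in> {1..m}" and "\<beta> k \<in> {1..n}"
    using assms(1,4) k by blast+
  then have "col (Pi_mat m n r \<alpha> \<beta>) (\<beta> k - 1) = unit_vec m (\<alpha> k - 1)"
    using col_Pi_mat[OF assms(5) k] by blast
  then show "col L (j - 1) = unit_vec m (j - 1)"
    unfolding j
    by (rule col_eq_unit_vec_if_fixes_col[OF Lm_carrier[OF assms(3)] Pi_mat_carrier assms(6)])
      (use \<open>\<alpha> k \<in> {1..m}\<close> \<open>\<beta> k \<in> {1..n}\<close> in auto)
qed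

end
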